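(* Let $w\in S_n$ and $1\le i<j<k<\ell\le n$ with $w_\ell<w_j<w_k<w_i$. Define $\tau\in S_n$ by $\tau_m=w_m$ for $m\notin\{j,k\}$, $\tau_j=w_k$, $\tau_k=w_j$. Let $x\in\mathfrak{sl}_n(\mathbb C)$ and let $H\subseteq\mathfrak{sl}_n(\mathbb C)$ be a Hessenberg space. If the Schubert cell $C_{w^{-1}}$ is contained in the adjoint Hessenberg variety $\mathcal B(x,H)$, then $\dot\tau^{-1}B\in\mathcal B(x,H)$.
   Context: $G=SL_n(\mathbb C)$, $B$ the upper triangular matrices in $G$, $\mathfrak b$ its Lie algebra. Permutations are written in one-line notation $w=[w_1\cdots w_n]$ with $w_i=w(i)$; $\dot w$ denotes a scalar multiple of the permutation matrix sending $e_i\mapsto e_{w(i)}$ lying in $G$. $C_w=B\dot wB/B\subseteq G/B$. A Hessenberg space is a subspace $H\subseteq\mathfrak{sl}_n(\mathbb C)$ with $[\mathfrak b,H]\subseteq H$; for $x\in\mathfrak{sl}_n(\mathbb C)$, $\mathcal B(x,H)=\{gB\in G/B: g^{-1}xg\in H\}$. *)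

theory Defs
  imports "Jordan_Normal_Form.Determinant" "HOL-Combinatorics.Permutations"
begin

text \<open>Matrices are n x n complex matrices with 0-based indices 0..n-1.\<close>

definition mtrace :: "complex mat \<Rightarrow> complex" where
  "mtrace A = (\<Sum>i<dim_row A. A $$ (i,i))"

definition SL :: "nat \<Rightarrow> complex mat set" where
  "SL n = {g \<in> carrier_mat n n. det g = 1}"

definition Bor :: "nat \<Rightarrow> complex mat set" where
  "Bor n = {b \<in> SL n. upper_triangular b}"

definition sl :: "nat \<Rightarrow> complex mat set" where
  "sl n = {X \<in> carrier_mat n n. mtrace X = 0}"

definition b_lie :: "nat \<Rightarrow> complex mat set" where
  "b_lie n = {X \<in> sl n. upper_triangular X}"

definition perm_mat :: "nat \<Rightarrow> (nat \<Rightarrow> nat) \<Rightarrow> complex mat" where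
  "perm_mat n w = mat n n (\<lambda>(r,c). if r = w c then 1 else 0)"

text \<open>All admissible lifts w-dot: scalar multiples of the permutation matrix lying in SL_n.\<close>
definition dots :: "nat \<Rightarrow> (nat \<Rightarrow> nat) \<Rightarrow> complex mat set" where
  "dots n w = {d \<in> SL n. \<exists>c. d = c \<cdot>\<^sub>m perm_mat n w}"

text \<open>The coset gB, a point of G/B.\<close>
definition coset :: "nat \<Rightarrow> complex mat \<Rightarrow> complex mat set" where
  "coset n g = {g * b | b. b \<in> Bor n}"

definition schubert_cell :: "nat \<Rightarrow> (nat \<Rightarrow> nat) \<Rightarrow> complex mat set set" where
  "schubert_cell n w = {coset n (b * d) | b d. b \<in> Bor n \<and> d \<in> dots n w}"

definition hessenberg_space :: "nat \<Rightarrow> complex mat set \<Rightarrow> bool" where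
  "hessenberg_space n H \<longleftrightarrow> H \<subseteq> sl n \<and> 0\<^sub>m n n \<in> H
     \<and> (\<forall>X\<in>H. \<forall>Y\<in>H. X + Y \<in> H) \<and> (\<forall>c. \<forall>X\<in>H. c \<cdot>\<^sub>m X \<in> H)
     \<and> (\<forall>X\<in>b_lie n. \<forall>Y\<in>H. X * Y - Y * X \<in> H)"

definition hess_var :: "nat \<Rightarrow> complex mat \<Rightarrow> complex mat set \<Rightarrow> complex mat set set" where
  "hess_var n x H = {coset n g | g. g \<in> SL n \<and>
      (\<exists>gi \<in> carrier_mat n n. gi * g = 1\<^sub>m n \<and> gi * x * g \<in> H)}"

end

theory Submission
  imports Defs
begin

text \<open>
  A Hessenberg space H is the sum of its diagonal part and the span of the matrix units E_ab
  it contains, and the positions (a,b) with E_ab in H form a set that is closed under moving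
  a up, moving b to the right, and reflecting a position below the diagonal. Consequently H is
  stable under conjugation by invertible upper triangular matrices, so membership of a coset
  in a Hessenberg variety does not depend on the representative. The set S of positions at
  which some B-conjugate of x has a nonzero entry has the same closure property, because
  conjugation by a transvection 1 + tE_uv spreads entries along rows and columns.

  The hypothesis on the Schubert cell says that P_w (b^-1 x b) P_w^-1 lies in H for every b in
  B, hence E_(w p)(w q) lies in H for every off-diagonal (p,q) in S. For tau = w composed with
  the transposition of j and k, each nonzero off-diagonal entry of P_tau x P_tau^-1 sits at a
  position (tau p, tau q) dominated by some (w p', w q') with (p',q') in S; for the entries
  moved by the transposition this uses w l < w j < w k < w i. The diagonal of P_tau x P_tau^-1
  differs from that of P_w x P_w^-1 by (x_kk - x_jj)(E_(wj)(wj) - E_(wk)(wk)), which lies in H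
  when x_jj differs from x_kk, because then (j,k), hence (i,l), lies in S.
\<close>

lemma index_mult_square:
  assumes "A \<in> carrier_mat n n" "B \<in> carrier_mat n n" "r < n" "s < n"
  shows "(A * B) $$ (r,s) = (\<Sum>m<n. A $$ (r,m) * B $$ (m,s))"
  using assms by (simp add: scalar_prod_def lessThan_atLeast0)

lemma index_mult3_square:
  fixes A B C :: "'a :: comm_ring_1 mat"
  assumes "A \<in> carrier_mat n n" "B \<in> carrier_mat n n" "C \<in> carrier_mat n n" "r < n" "s < n"
  shows "(A * B * C) $$ (r,s) = (\<Sum>a<n. \<Sum>c<n. A $$ (r,a) * B $$ (a,c) * C $$ (c,s))"
proof -
  have "(A * B * C) $$ (r,s) = (\<Sum>c<n. (A * B) $$ (r,c) * C $$ (c,s))"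
    using assms by (intro index_mult_square) auto
  also have "\<dots> = (\<Sum>c<n. (\<Sum>a<n. A $$ (r,a) * B $$ (a,c)) * C $$ (c,s))"
    by (intro sum.cong refl arg_cong2[where f="(*)"] index_mult_square) (use assms in auto)
  also have "\<dots> = (\<Sum>c<n. \<Sum>a<n. A $$ (r,a) * B $$ (a,c) * C $$ (c,s))"
    by (simp add: sum_distrib_right)
  also have "\<dots> = (\<Sum>a<n. \<Sum>c<n. A $$ (r,a) * B $$ (a,c) * C $$ (c,s))"
    by (rule sum.swap)
  finally show ?thesis .
qed

lemma sum_lessThan_single:
  assumes "(s::nat) < n" "\<And>m. m < n \<Longrightarrow> m \<noteq> s \<Longrightarrow> f m = (0::'a::comm_monoid_add)"
  shows "(\<Sum>m<n. f m) = f s"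
proof -
  have "(\<Sum>m<n. f m) = (\<Sum>m<n. if m = s then f s else 0)" using assms by (intro sum.cong) auto
  then show ?thesis using assms by simp
qed

lemma left_inverse_cancel:
  fixes A B X :: "'a :: semiring_1 mat"
  assumes "A \<in> carrier_mat n n" "B \<in> carrier_mat n n" "X \<in> carrier_mat n m" "A * B = 1\<^sub>m n"
  shows "A * (B * X) = X"
  using assms by (simp flip: assoc_mult_mat[of A n n B n X m])

lemma smult_inverse_cancel:
  fixes c :: "'a :: field"
  assumes "c \<noteq> 0"
  shows "c \<cdot>\<^sub>m ((1/c) \<cdot>\<^sub>m A) = A" "(1/c) \<cdot>\<^sub>m (c \<cdot>\<^sub>m A) = A"
  using assms by (auto intro: eq_matI)

lemma commutator_mat_diag_index:
  fixes Y :: "'a :: comm_ring_1 mat"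
  assumes "Y \<in> carrier_mat n n" "r < n" "s < n"
  shows "(mat_diag n f * Y - Y * mat_diag n f) $$ (r,s) = (f r - f s) * Y $$ (r,s)"
  using assms by (simp add: mat_diag_mult_left[OF assms(1)] mat_diag_mult_right[OF assms(1)]
      algebra_simps)

lemma dim_mat_diag[simp]: "dim_row (mat_diag n f) = n" "dim_col (mat_diag n f) = n"
  by (simp_all add: mat_diag_def)

lemma upper_triangular_zero:
  "upper_triangular A \<Longrightarrow> A \<in> carrier_mat n n \<Longrightarrow> a < r \<Longrightarrow> r < n \<Longrightarrow> A $$ (r,a) = 0"
  by auto

lemma upper_triangular_diag_nonzero:
  fixes b :: "'a :: idom mat"
  assumes "upper_triangular b" "b \<in> carrier_mat n n" "det b \<noteq> 0" "s < n"
  shows "b $$ (s,s) \<noteq> 0"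
proof
  assume "b $$ (s,s) = 0"
  then have "0 \<in> set (diag_mat b)" using assms by (force simp: diag_mat_def)
  then have "prod_list (diag_mat b) = 0" by (simp add: prod_list_zero_iff)
  then show False using det_upper_triangular[OF assms(1,2)] assms(3) by simp
qed

lemma upper_triangular_left_inverse:
  fixes b bi :: "'a :: idom mat"
  assumes "upper_triangular b" "b \<in> carrier_mat n n" "det b \<noteq> 0" "bi \<in> carrier_mat n n"
    "bi * b = 1\<^sub>m n"
  shows "upper_triangular bi"
proof -
  have "\<forall>r. s < r \<longrightarrow> r < n \<longrightarrow> bi $$ (r,s) = 0" for s
  proof (induction s rule: less_induct)
    case (less s)
    show ?case
    proof (intro allI impI)
      fix r assume sr: "s < r" "r < n"
      have "0 = (bi * b) $$ (r,s)" using assms sr by simp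
      also have "\<dots> = (\<Sum>m<n. bi $$ (r,m) * b $$ (m,s))"
        using assms sr by (intro index_mult_square) auto
      also have "\<dots> = bi $$ (r,s) * b $$ (s,s)"
      proof (rule sum_lessThan_single)
        fix m assume m: "m < n" "m \<noteq> s"
        show "bi $$ (r,m) * b $$ (m,s) = 0"
        proof (cases "m < s")
          case True then show ?thesis using less sr m by auto
        next
          case False then show ?thesis using upper_triangular_zero[OF assms(1,2)] m by simp
        qed
      qed (use sr in auto)
      finally show "bi $$ (r,s) = 0"
        using upper_triangular_diag_nonzero[OF assms(1-3), of s] sr by simp
    qed
  qed
  then show ?thesis using assms by (intro upper_triangularI) auto
qed

lemma upper_triangular_mult:
  fixes a b :: "'a :: comm_ring_1 mat"
  assumes "a \<in> carrier_mat n n" "b \<in> carrier_mat n n" "upper_triangular a" "upper_triangular b"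
  shows "upper_triangular (a * b)"
proof (rule upper_triangularI)
  fix r s assume rs: "s < r" "r < dim_row (a * b)"
  then have r: "r < n" using assms by simp
  have "(a * b) $$ (r,s) = (\<Sum>m<n. a $$ (r,m) * b $$ (m,s))"
    using assms r rs by (intro index_mult_square) auto
  also have "\<dots> = 0"
  proof (intro sum.neutral ballI)
    fix m assume m: "m \<in> {..<n}"
    show "a $$ (r,m) * b $$ (m,s) = 0"
      using upper_triangular_zero[OF assms(3,1)] upper_triangular_zero[OF assms(4,2)] r rs m
      by (cases "m < r") auto
  qed
  finally show "(a * b) $$ (r,s) = 0" .
qed

lemma one_in_Bor: "1\<^sub>m n \<in> Bor n"
  unfolding Bor_def SL_def by auto

lemma Bor_mult:
  assumes "b \<in> Bor n" "b' \<in> Bor n"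
  shows "b * b' \<in> Bor n"
  using assms upper_triangular_mult[of b n b'] det_mult[of b n b']
  unfolding Bor_def SL_def by auto

lemma complex_nth_root_exists:
  fixes z :: complex
  assumes "z \<noteq> 0" "n > 0"
  shows "\<exists>c. c ^ n = z"
proof -
  have "(\<lambda>y. root n (norm z) * cis (Arg z / n) * y) ` {y. y ^ n = 1} = {y. y ^ n = z}"
    using bij_betw_nth_root_unity[OF assms] by (simp add: bij_betw_def)
  then show ?thesis by (metis (mono_tags) image_eqI mem_Collect_eq power_one)
qed

definition mat_unit :: "nat \<Rightarrow> nat \<Rightarrow> nat \<Rightarrow> complex mat" where
  "mat_unit n a b = mat n n (\<lambda>(r,s). if r = a \<and> s = b then 1 else 0)"

lemma mat_unit_carrier[simp]: "mat_unit n a b \<in> carrier_mat n n"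
  by (simp add: mat_unit_def)

lemma mat_unit_dim[simp]: "dim_row (mat_unit n a b) = n" "dim_col (mat_unit n a b) = n"
  by (simp_all add: mat_unit_def)

lemma mat_unit_index[simp]:
  "r < n \<Longrightarrow> s < n \<Longrightarrow> mat_unit n a b $$ (r,s) = (if r = a \<and> s = b then 1 else 0)"
  by (simp add: mat_unit_def)

lemma mat_unit_mult_index:
  assumes "Y \<in> carrier_mat n n" "b < n" "r < n" "s < n"
  shows "(mat_unit n a b * Y) $$ (r,s) = (if r = a then Y $$ (b,s) else 0)"
proof -
  have "(mat_unit n a b * Y) $$ (r,s) = (\<Sum>m<n. mat_unit n a b $$ (r,m) * Y $$ (m,s))"
    using assms by (intro index_mult_square) auto
  also have "\<dots> = mat_unit n a b $$ (r,b) * Y $$ (b,s)"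
    using assms by (intro sum_lessThan_single) auto
  finally show ?thesis using assms by simp
qed

lemma mult_mat_unit_index:
  assumes "Y \<in> carrier_mat n n" "a < n" "r < n" "s < n"
  shows "(Y * mat_unit n a b) $$ (r,s) = (if s = b then Y $$ (r,a) else 0)"
proof -
  have "(Y * mat_unit n a b) $$ (r,s) = (\<Sum>m<n. Y $$ (r,m) * mat_unit n a b $$ (m,s))"
    using assms by (intro index_mult_square) auto
  also have "\<dots> = Y $$ (r,a) * mat_unit n a b $$ (a,s)"
    using assms by (intro sum_lessThan_single) auto
  finally show ?thesis using assms by simp
qed

lemma mat_unit_mult_mat_unit:
  assumes "b < n"
  shows "mat_unit n a b * mat_unit n c d = (if b = c then mat_unit n a d else 0\<^sub>m n n)"
  by (rule eq_matI) (use assms in \<open>auto simp del: index_mult_mat(1) simp: mat_unit_mult_index\<close>)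

lemma mat_unit_in_b_lie: "a < b \<Longrightarrow> b < n \<Longrightarrow> mat_unit n a b \<in> b_lie n"
  unfolding b_lie_def sl_def mtrace_def upper_triangular_def
  by (auto intro!: sum.neutral)

definition coroot :: "nat \<Rightarrow> nat \<Rightarrow> nat \<Rightarrow> complex mat" where
  "coroot n a b = mat_diag n (\<lambda>i. (if i = a then 1 else 0) - (if i = b then 1 else 0))"

lemma coroot_carrier[simp]: "coroot n a b \<in> carrier_mat n n"
  by (simp add: coroot_def)

lemma coroot_dim[simp]: "dim_row (coroot n a b) = n" "dim_col (coroot n a b) = n"
  by (simp_all add: coroot_def)

lemma coroot_index[simp]:
  "r < n \<Longrightarrow> s < n \<Longrightarrow>
   coroot n a b $$ (r,s) = (if r = s then (if s = a then 1 else 0) - (if s = b then 1 else 0) else 0)"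
  by (simp add: coroot_def mat_diag_def)

lemma coroot_in_b_lie:
  assumes "a \<noteq> b" "a < n" "b < n"
  shows "coroot n a b \<in> b_lie n"
proof -
  have "(\<Sum>i<n. coroot n a b $$ (i,i)) = (\<Sum>i<n. (if i = a then 1 else 0) - (if i = b then 1 else 0))"
    by (rule sum.cong) auto
  also have "\<dots> = 0" using assms by (simp add: sum_subtractf)
  finally show ?thesis unfolding b_lie_def sl_def mtrace_def upper_triangular_def by auto
qed

definition diag_part :: "nat \<Rightarrow> complex mat \<Rightarrow> complex mat" where
  "diag_part n Y = mat_diag n (\<lambda>i. Y $$ (i,i))"

lemma diag_part_carrier[simp]: "diag_part n Y \<in> carrier_mat n n"
  by (simp add: diag_part_def)

lemma diag_part_dim[simp]: "dim_row (diag_part n Y) = n" "dim_col (diag_part n Y) = n"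
  by (simp_all add: diag_part_def)

lemma diag_part_index[simp]:
  "r < n \<Longrightarrow> s < n \<Longrightarrow> diag_part n Y $$ (r,s) = (if r = s then Y $$ (r,s) else 0)"
  by (simp add: diag_part_def mat_diag_def)

fun mat_sum_list :: "nat \<Rightarrow> ('i \<Rightarrow> complex mat) \<Rightarrow> 'i list \<Rightarrow> complex mat" where
  "mat_sum_list n f [] = 0\<^sub>m n n"
| "mat_sum_list n f (i # is) = f i + mat_sum_list n f is"

lemma mat_sum_list_carrier:
  "(\<And>i. i \<in> set is \<Longrightarrow> f i \<in> carrier_mat n n) \<Longrightarrow> mat_sum_list n f is \<in> carrier_mat n n"
  by (induction "is") auto

lemma mat_sum_list_index:
  "(\<And>i. i \<in> set is \<Longrightarrow> f i \<in> carrier_mat n n) \<Longrightarrow> r < n \<Longrightarrow> s < n \<Longrightarrow>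
   mat_sum_list n f is $$ (r,s) = (\<Sum>i\<leftarrow>is. f i $$ (r,s))"
proof (induction "is")
  case (Cons i "is")
  then have "mat_sum_list n f is \<in> carrier_mat n n" by (intro mat_sum_list_carrier) auto
  then show ?case using Cons by simp
qed simp

definition off_diag_positions :: "nat \<Rightarrow> (nat \<times> nat) list" where
  "off_diag_positions n = filter (\<lambda>(r,s). r \<noteq> s) (List.product [0..<n] [0..<n])"

lemma set_off_diag_positions: "set (off_diag_positions n) = {(r,s). r < n \<and> s < n \<and> r \<noteq> s}"
  by (auto simp: off_diag_positions_def)

lemma off_diag_part_as_sum:
  assumes "Y \<in> carrier_mat n n"
  shows "Y - diag_part n Y
    = mat_sum_list n (\<lambda>p. Y $$ p \<cdot>\<^sub>m mat_unit n (fst p) (snd p)) (off_diag_positions n)"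
    (is "_ = ?S")
proof (rule eq_matI)
  have c: "?S \<in> carrier_mat n n" by (rule mat_sum_list_carrier) simp
  then show "dim_row (Y - diag_part n Y) = dim_row ?S" "dim_col (Y - diag_part n Y) = dim_col ?S"
    using assms by auto
  fix r s assume "r < dim_row ?S" "s < dim_col ?S"
  then have rs: "r < n" "s < n" using c by auto
  have "?S $$ (r,s) = (\<Sum>p\<leftarrow>off_diag_positions n. (Y $$ p \<cdot>\<^sub>m mat_unit n (fst p) (snd p)) $$ (r,s))"
    using rs by (intro mat_sum_list_index) auto
  also have "\<dots> = (\<Sum>p\<in>set (off_diag_positions n). (Y $$ p \<cdot>\<^sub>m mat_unit n (fst p) (snd p)) $$ (r,s))"
    by (rule sum_list_distinct_conv_sum_set) (simp add: off_diag_positions_def distinct_product)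
  also have "\<dots> = (\<Sum>p\<in>set (off_diag_positions n). if p = (r,s) then Y $$ (r,s) else 0)"
    using rs by (intro sum.cong) (auto simp: set_off_diag_positions)
  also have "\<dots> = (if (r,s) \<in> set (off_diag_positions n) then Y $$ (r,s) else 0)"
    by (rule sum.delta) simp
  also have "\<dots> = (Y - diag_part n Y) $$ (r,s)"
    using rs assms by (simp add: set_off_diag_positions)
  finally show "(Y - diag_part n Y) $$ (r,s) = ?S $$ (r,s)" by simp
qed

lemma partial_sums_telescope:
  fixes v :: "nat \<Rightarrow> 'a :: ab_group_add"
  assumes "r < n" "(\<Sum>m<n. v m) = 0"
  shows "(\<Sum>m\<in>{0..<n-1}. (if m = r then (\<Sum>i\<le>m. v i) else 0)
      - (if Suc m = r then (\<Sum>i\<le>m. v i) else 0)) = v r"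
proof (cases r)
  case 0
  then show ?thesis using assms by (cases "n = 1") (simp_all add: sum_subtractf)
next
  case (Suc r')
  have "(\<Sum>m\<in>{0..<n-1}. (if m = r then (\<Sum>i\<le>m. v i) else 0)
      - (if Suc m = r then (\<Sum>i\<le>m. v i) else 0))
      = (if r < n - 1 then (\<Sum>i\<le>r. v i) else 0) - (\<Sum>i\<le>r'. v i)"
    using Suc assms(1) by (simp add: sum_subtractf)
  also have "\<dots> = v r"
  proof (cases "r < n - 1")
    case False
    then have "{..r} = {..<n}" using assms(1) by auto
    have "(\<Sum>i\<le>r'. v i) + v r = (\<Sum>i\<le>r. v i)" using Suc by simp
    also have "\<dots> = 0" using \<open>{..r} = {..<n}\<close> assms(2) by simp
    finally show ?thesis using False by (simp add: add_eq_0_iff2)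
  qed (use Suc in simp)
  finally show ?thesis .
qed

lemma traceless_mat_diag_as_sum:
  assumes "(\<Sum>m<n. v m) = 0"
  shows "mat_diag n v = mat_sum_list n (\<lambda>m. (\<Sum>i\<le>m. v i) \<cdot>\<^sub>m coroot n m (Suc m)) [0..<n-1]"
    (is "_ = ?S")
proof (rule eq_matI)
  let ?T = "\<lambda>m. (\<Sum>i\<le>m. v i)"
  have c: "?S \<in> carrier_mat n n" by (rule mat_sum_list_carrier) simp
  then show "dim_row (mat_diag n v) = dim_row ?S" "dim_col (mat_diag n v) = dim_col ?S" by auto
  fix r s assume "r < dim_row ?S" "s < dim_col ?S"
  then have rs: "r < n" "s < n" using c by auto
  have "?S $$ (r,s) = (\<Sum>m\<leftarrow>[0..<n-1]. (?T m \<cdot>\<^sub>m coroot n m (Suc m)) $$ (r,s))"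
    using rs by (intro mat_sum_list_index) auto
  also have "\<dots> = (\<Sum>m\<in>{0..<n-1}. (?T m \<cdot>\<^sub>m coroot n m (Suc m)) $$ (r,s))"
    by (simp add: interv_sum_list_conv_sum_set_nat)
  also have "\<dots> = (\<Sum>m\<in>{0..<n-1}. if r = s then
      (if m = r then ?T m else 0) - (if Suc m = r then ?T m else 0) else 0)"
    using rs by (intro sum.cong) (auto simp: algebra_simps)
  also have "\<dots> = mat_diag n v $$ (r,s)"
  proof (cases "r = s")
    case True
    have "(\<Sum>m\<in>{0..<n-1}. (if m = r then ?T m else 0) - (if Suc m = r then ?T m else 0)) = v r"
      using partial_sums_telescope[OF rs(1) assms] .
    then show ?thesis using True rs by (simp add: mat_diag_def)
  qed (use rs in \<open>simp add: mat_diag_def\<close>)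
  finally show "mat_diag n v $$ (r,s) = ?S $$ (r,s)" by simp
qed

lemma partial_trace_conj_upper_triangular:
  fixes b Z bi :: "complex mat"
  assumes "b \<in> carrier_mat n n" "Z \<in> carrier_mat n n" "bi \<in> carrier_mat n n"
    "upper_triangular b" "upper_triangular bi" "bi * b = 1\<^sub>m n" "r < n"
    "\<And>a c. c \<le> r \<Longrightarrow> r < a \<Longrightarrow> a < n \<Longrightarrow> Z $$ (a,c) = 0"
  shows "(\<Sum>m\<le>r. (b * Z * bi) $$ (m,m)) = (\<Sum>m\<le>r. Z $$ (m,m))"
proof -
  let ?t = "\<lambda>m a c. if m \<le> r then b $$ (m,a) * Z $$ (a,c) * bi $$ (c,m) else 0"
  have per: "(\<Sum>m<n. ?t m a c) = (if c = a then if a \<le> r then Z $$ (a,a) else 0 else 0)"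
    if ac: "a < n" "c < n" for a c
  proof (cases "a \<le> r")
    case True
    have "(\<Sum>m<n. ?t m a c) = (\<Sum>m<n. Z $$ (a,c) * (bi $$ (c,m) * b $$ (m,a)))"
      using True assms(1,4) by (intro sum.cong refl) (auto simp: ac_simps)
    also have "\<dots> = Z $$ (a,c) * (bi * b) $$ (c,a)"
      using index_mult_square[of bi n b c a] assms ac by (simp add: sum_distrib_left)
    finally show ?thesis using assms ac True by auto
  next
    case False
    have "?t m a c = 0" if "m < n" for m
      using False upper_triangular_zero[OF assms(5,3)] assms(8) ac that by (cases "c \<le> r") auto
    then show ?thesis using False by simp
  qed
  have "(\<Sum>m\<le>r. (b * Z * bi) $$ (m,m)) = (\<Sum>m<n. if m \<le> r then (b * Z * bi) $$ (m,m) else 0)"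
    using assms(7) by (intro sum.mono_neutral_cong_left) auto
  also have "\<dots> = (\<Sum>m<n. \<Sum>a<n. \<Sum>c<n. ?t m a c)"
    by (intro sum.cong refl) (simp add: index_mult3_square[OF assms(1-3)] del: index_mult_mat(1))
  also have "\<dots> = (\<Sum>a<n. \<Sum>m<n. \<Sum>c<n. ?t m a c)"
    by (rule sum.swap)
  also have "\<dots> = (\<Sum>a<n. \<Sum>c<n. \<Sum>m<n. ?t m a c)"
    by (intro sum.cong refl sum.swap)
  also have "\<dots> = (\<Sum>a<n. \<Sum>c<n. if c = a then if a \<le> r then Z $$ (a,a) else 0 else 0)"
    using per by (intro sum.cong refl) auto
  also have "\<dots> = (\<Sum>a<n. if a \<le> r then Z $$ (a,a) else 0)"
    by simp
  also have "\<dots> = (\<Sum>m\<le>r. Z $$ (m,m))"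
    using assms(7) by (intro sum.mono_neutral_cong_right) auto
  finally show ?thesis .
qed

section \<open>Hessenberg spaces\<close>

definition shift_closed :: "nat \<Rightarrow> (nat \<times> nat) set \<Rightarrow> bool" where
  "shift_closed n S \<longleftrightarrow>
     (\<forall>a b a'. (a,b) \<in> S \<longrightarrow> a \<noteq> b \<longrightarrow> a' < a \<longrightarrow> a < n \<longrightarrow> b < n \<longrightarrow> a' \<noteq> b \<longrightarrow> (a',b) \<in> S)
   \<and> (\<forall>a b b'. (a,b) \<in> S \<longrightarrow> a \<noteq> b \<longrightarrow> b < b' \<longrightarrow> b' < n \<longrightarrow> a < n \<longrightarrow> a \<noteq> b' \<longrightarrow> (a,b') \<in> S)
   \<and> (\<forall>a b. (a,b) \<in> S \<longrightarrow> b < a \<longrightarrow> a < n \<longrightarrow> (b,a) \<in> S)"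

lemma shift_closedD:
  assumes "shift_closed n S" "(a,b) \<in> S" "a < n" "b < n" "a \<noteq> b"
    "a' \<le> a" "b \<le> b'" "b' < n" "a' \<noteq> b'"
  shows "(a',b') \<in> S"
proof -
  note closed = assms(1)[unfolded shift_closed_def]
  have row: "(a',b) \<in> S" if "(a,b) \<in> S" "a \<noteq> b" "a' \<le> a" "a < n" "b < n" "a' \<noteq> b" for a b a'
  proof (cases "a' = a")
    case False
    then show ?thesis using conjunct1[OF closed] that by simp
  qed (use that in simp)
  have col: "(a,b') \<in> S" if "(a,b) \<in> S" "a \<noteq> b" "b \<le> b'" "b' < n" "a < n" "a \<noteq> b'" for a b b'
  proof (cases "b = b'")
    case False
    then show ?thesis using conjunct1[OF conjunct2[OF closed]] that by simp
  qed (use that in simp)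
  have flip: "(b,a) \<in> S" if "(a,b) \<in> S" "b < a" "a < n" for a b
    using conjunct2[OF conjunct2[OF closed]] that by simp
  consider "a' \<noteq> b" | "a' = b" "a \<noteq> b'" | "a' = b" "a = b'" by blast
  then show ?thesis
  proof cases
    case 1
    then have "(a',b) \<in> S" using row[OF assms(2,5,6,3,4)] by simp
    then show ?thesis using col[of a' b b'] 1 assms by simp
  next
    case 2
    then have "(a,b') \<in> S" using col[OF assms(2,5,7,8,3)] by simp
    then show ?thesis using row[of a b' a'] 2 assms by simp
  next
    case 3
    then show ?thesis using flip[OF assms(2)] assms by simp
  qed
qed

locale hessenberg =
  fixes n :: nat and H :: "complex mat set"
  assumes hessenberg_space: "hessenberg_space n H"
begin

lemma H_carrier: "Z \<in> H \<Longrightarrow> Z \<in> carrier_mat n n"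
  using hessenberg_space unfolding hessenberg_space_def sl_def by auto

lemma H_zero: "0\<^sub>m n n \<in> H"
  using hessenberg_space unfolding hessenberg_space_def by auto

lemma H_add: "X \<in> H \<Longrightarrow> Y \<in> H \<Longrightarrow> X + Y \<in> H"
  using hessenberg_space unfolding hessenberg_space_def by auto

lemma H_smult: "X \<in> H \<Longrightarrow> c \<cdot>\<^sub>m X \<in> H"
  using hessenberg_space unfolding hessenberg_space_def by auto

lemma H_bracket: "X \<in> b_lie n \<Longrightarrow> Y \<in> H \<Longrightarrow> X * Y - Y * X \<in> H"
  using hessenberg_space unfolding hessenberg_space_def by auto

lemma H_diff:
  assumes "X \<in> H" "Y \<in> H"
  shows "X - Y \<in> H"
proof -
  have "X - Y = X + (-1) \<cdot>\<^sub>m Y" using assms by (intro eq_matI) (auto dest: H_carrier)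
  then show ?thesis using H_add H_smult assms by metis
qed

lemma H_smult_cancel:
  assumes "c \<cdot>\<^sub>m X \<in> H" "c \<noteq> 0"
  shows "X \<in> H"
  using H_smult[OF assms(1), of "1/c"] smult_inverse_cancel(2)[OF assms(2)] by simp

lemma H_mat_sum_list: "(\<And>i. i \<in> set is \<Longrightarrow> f i \<in> H) \<Longrightarrow> mat_sum_list n f is \<in> H"
  by (induction "is") (auto intro: H_add H_zero)

lemma H_smult_or_zero:
  assumes "c \<noteq> 0 \<Longrightarrow> X \<in> H" "X \<in> carrier_mat n n"
  shows "c \<cdot>\<^sub>m X \<in> H"
proof (cases "c = 0")
  case True
  then have "c \<cdot>\<^sub>m X = 0\<^sub>m n n" using assms(2) by (intro eq_matI) auto
  then show ?thesis using H_zero by simp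
qed (use assms H_smult in auto)

text \<open>
  The weight of the (r,s) entry under ad(coroot a b) is d in {-2,...,2}, and the combination
  d(d-1)(d+1)(d+2) of the first four iterates isolates the weight 2, which only (a,b) carries.
\<close>

lemma mat_unit_in_H_of_entry:
  assumes "Z \<in> H" "a \<noteq> b" "a < n" "b < n" "Z $$ (a,b) \<noteq> 0"
  shows "mat_unit n a b \<in> H"
proof -
  define h where "h = coroot n a b"
  define ad where "ad Y = h * Y - Y * h" for Y
  define d :: "nat \<Rightarrow> nat \<Rightarrow> complex" where "d r s = ((if r = a then 1 else 0) - (if r = b then 1 else 0))
      - ((if s = a then 1 else 0) - (if s = b then 1 else 0))" for r s
  have ad_H: "Y \<in> H \<Longrightarrow> ad Y \<in> H" for Y
    unfolding ad_def h_def by (rule H_bracket[OF coroot_in_b_lie[OF assms(2-4)]])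
  have ad_carrier: "Y \<in> carrier_mat n n \<Longrightarrow> ad Y \<in> carrier_mat n n" for Y
    unfolding ad_def h_def by auto
  have ad_index: "ad Y $$ (r,s) = d r s * Y $$ (r,s)"
    if "Y \<in> carrier_mat n n" "r < n" "s < n" for Y r s
    using commutator_mat_diag_index[OF that] unfolding ad_def h_def coroot_def d_def .
  have Zc: "Z \<in> carrier_mat n n" using H_carrier assms by auto
  have carriers: "ad Z \<in> carrier_mat n n" "ad (ad Z) \<in> carrier_mat n n"
      "ad (ad (ad Z)) \<in> carrier_mat n n" "ad (ad (ad (ad Z))) \<in> carrier_mat n n"
    using Zc by (simp_all add: ad_carrier)
  define Q where "Q = ad (ad (ad (ad Z))) + 2 \<cdot>\<^sub>m ad (ad (ad Z))
      + ((-1) \<cdot>\<^sub>m ad (ad Z) + (-2) \<cdot>\<^sub>m ad Z)"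
  have "Q \<in> H" unfolding Q_def using assms(1) by (intro H_add H_smult ad_H)
  moreover have "Q = (24 * Z $$ (a,b)) \<cdot>\<^sub>m mat_unit n a b"
  proof (rule eq_matI)
    fix r s assume "r < dim_row ((24 * Z $$ (a,b)) \<cdot>\<^sub>m mat_unit n a b)"
      "s < dim_col ((24 * Z $$ (a,b)) \<cdot>\<^sub>m mat_unit n a b)"
    then have rs: "r < n" "s < n" by auto
    have "ad Z $$ (r,s) = d r s * Z $$ (r,s)" "ad (ad Z) $$ (r,s) = d r s ^ 2 * Z $$ (r,s)"
        "ad (ad (ad Z)) $$ (r,s) = d r s ^ 3 * Z $$ (r,s)"
        "ad (ad (ad (ad Z))) $$ (r,s) = d r s ^ 4 * Z $$ (r,s)"
      using rs Zc carriers
      by (simp_all only: ad_index power2_eq_square power3_eq_cube power4_eq_xxxx mult.assoc)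
    then have "Q $$ (r,s) = (d r s ^ 4 + 2 * d r s ^ 3 - d r s ^ 2 - 2 * d r s) * Z $$ (r,s)"
      unfolding Q_def using rs carriers by (simp add: algebra_simps)
    also have "\<dots> = (24 * Z $$ (a,b)) * (if r = a \<and> s = b then 1 else 0)"
      using assms unfolding d_def by (auto simp: power2_eq_square power3_eq_cube power4_eq_xxxx)
    finally show "Q $$ (r,s) = ((24 * Z $$ (a,b)) \<cdot>\<^sub>m mat_unit n a b) $$ (r,s)" using rs by simp
  qed (use carriers in \<open>auto simp: Q_def\<close>)
  ultimately show ?thesis using H_smult_cancel[of "24 * Z $$ (a,b)"] assms by auto
qed

lemma mat_unit_in_H_row_up:
  assumes "mat_unit n a b \<in> H" "a' < a" "a < n" "a' \<noteq> b" "b < n"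
  shows "mat_unit n a' b \<in> H"
proof -
  have "mat_unit n a' b = mat_unit n a' a * mat_unit n a b - mat_unit n a b * mat_unit n a' a"
    using assms by (intro eq_matI) (auto simp: mat_unit_mult_mat_unit)
  then show ?thesis using H_bracket[OF mat_unit_in_b_lie[OF assms(2,3)] assms(1)] by simp
qed

lemma mat_unit_in_H_col_right:
  assumes "mat_unit n a b \<in> H" "b < b'" "b' < n" "a \<noteq> b'" "a < n"
  shows "mat_unit n a b' \<in> H"
proof -
  have "mat_unit n a b'
      = (-1) \<cdot>\<^sub>m (mat_unit n b b' * mat_unit n a b - mat_unit n a b * mat_unit n b b')"
    using assms by (intro eq_matI) (auto simp: mat_unit_mult_mat_unit)
  then show ?thesis using H_smult[OF H_bracket[OF mat_unit_in_b_lie[OF assms(2,3)] assms(1)]]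
    by simp
qed

lemma coroot_in_H:
  assumes "mat_unit n a b \<in> H" "b < a" "a < n"
  shows "coroot n b a \<in> H"
proof -
  have "coroot n b a = mat_unit n b a * mat_unit n a b - mat_unit n a b * mat_unit n b a"
    using assms by (intro eq_matI) (auto simp: mat_unit_mult_mat_unit)
  then show ?thesis using H_bracket[OF mat_unit_in_b_lie[OF assms(2,3)] assms(1)] by simp
qed

lemma mat_unit_in_H_transpose:
  assumes "mat_unit n a b \<in> H" "b < a" "a < n"
  shows "mat_unit n b a \<in> H"
proof -
  let ?h = "coroot n b a" and ?e = "mat_unit n b a"
  have "?e = (-1/2) \<cdot>\<^sub>m (?e * ?h - ?h * ?e)"
    using assms by (intro eq_matI) (auto simp: mult_mat_unit_index mat_unit_mult_index
        simp del: index_mult_mat(1))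
  also have "\<dots> \<in> H"
    using H_smult[OF H_bracket[OF mat_unit_in_b_lie[OF assms(2,3)] coroot_in_H[OF assms]]] .
  finally show ?thesis .
qed

lemma shift_closed_mat_units: "shift_closed n {(a,b). mat_unit n a b \<in> H}"
  unfolding shift_closed_def
  using mat_unit_in_H_row_up mat_unit_in_H_col_right mat_unit_in_H_transpose by blast

lemma mat_unit_in_H_shift:
  assumes "mat_unit n a b \<in> H" "a < n" "b < n" "a \<noteq> b" "a' \<le> a" "b \<le> b'" "b' < n" "a' \<noteq> b'"
  shows "mat_unit n a' b' \<in> H"
  using shift_closedD[OF shift_closed_mat_units, of a b a' b'] assms by auto

lemma off_diag_part_in_H:
  assumes "Y \<in> carrier_mat n n"
    "\<And>r s. r < n \<Longrightarrow> s < n \<Longrightarrow> r \<noteq> s \<Longrightarrow> Y $$ (r,s) \<noteq> 0 \<Longrightarrow> mat_unit n r s \<in> H"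
  shows "Y - diag_part n Y \<in> H"
  unfolding off_diag_part_as_sum[OF assms(1)]
  by (rule H_mat_sum_list, rule H_smult_or_zero) (use assms(2) in \<open>auto simp: set_off_diag_positions\<close>)

lemma in_H_of_entries:
  assumes "Y \<in> carrier_mat n n"
    "\<And>r s. r < n \<Longrightarrow> s < n \<Longrightarrow> r \<noteq> s \<Longrightarrow> Y $$ (r,s) \<noteq> 0 \<Longrightarrow> mat_unit n r s \<in> H"
    "diag_part n Y \<in> H"
  shows "Y \<in> H"
proof -
  have "Y = (Y - diag_part n Y) + diag_part n Y" using assms(1) by (intro eq_matI) auto
  then show ?thesis using H_add[OF off_diag_part_in_H[OF assms(1,2)] assms(3)] by simp
qed

lemma diag_part_in_H:
  assumes "Y \<in> H"
  shows "diag_part n Y \<in> H"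
proof -
  have c: "Y \<in> carrier_mat n n" using assms H_carrier by auto
  have "Y - diag_part n Y \<in> H"
    by (rule off_diag_part_in_H[OF c]) (use mat_unit_in_H_of_entry assms in auto)
  then have "Y - (Y - diag_part n Y) \<in> H" using H_diff assms by blast
  moreover have "Y - (Y - diag_part n Y) = diag_part n Y" using c by (intro eq_matI) auto
  ultimately show ?thesis by simp
qed

lemma traceless_mat_diag_in_H:
  assumes "(\<Sum>m<n. v m) = 0"
    "\<And>r. Suc r < n \<Longrightarrow> (\<Sum>i\<le>r. v i) \<noteq> 0 \<Longrightarrow> coroot n r (Suc r) \<in> H"
  shows "mat_diag n v \<in> H"
  unfolding traceless_mat_diag_as_sum[OF assms(1)]
  by (rule H_mat_sum_list, rule H_smult_or_zero) (use assms(2) in auto)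

lemma mat_unit_in_H_of_diag_entries:
  assumes "Z \<in> H" "r < m" "m < n" "Z $$ (r,r) \<noteq> Z $$ (m,m)"
  shows "mat_unit n r m \<in> H"
proof -
  let ?e = "mat_unit n r m" and ?D = "diag_part n Z"
  have "?e * ?D - ?D * ?e = (Z $$ (m,m) - Z $$ (r,r)) \<cdot>\<^sub>m ?e"
    using assms(2,3) by (intro eq_matI)
      (auto simp: diag_part_def mat_diag_mult_left[of _ n n] mat_diag_mult_right[of _ n n])
  then show ?thesis
    using H_bracket[OF mat_unit_in_b_lie[OF assms(2,3)] diag_part_in_H[OF assms(1)]]
      H_smult_cancel[of "Z $$ (m,m) - Z $$ (r,r)"] assms(4) by auto
qed

subsection \<open>Stability under upper triangular conjugation\<close>

context
  fixes b bi Z :: "complex mat"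
  assumes Z: "Z \<in> H" and b: "b \<in> carrier_mat n n" "upper_triangular b" "det b \<noteq> 0"
    and bi: "bi \<in> carrier_mat n n" "bi * b = 1\<^sub>m n"
begin

lemma conj_upper_triangular_entry_in_H:
  assumes rs: "r < n" "s < n" "r \<noteq> s" "(b * Z * bi) $$ (r,s) \<noteq> 0"
  shows "mat_unit n r s \<in> H"
proof (rule ccontr)
  assume not_in: "mat_unit n r s \<notin> H"
  have Zc: "Z \<in> carrier_mat n n" using Z H_carrier by auto
  have biu: "upper_triangular bi" using upper_triangular_left_inverse[OF b(2,1,3) bi] .
  have bbi: "b * bi = 1\<^sub>m n" using mat_mult_left_right_inverse[OF bi(1) b(1) bi(2)] .
  have b_zero: "b $$ (r,a) = 0" if "a < r" for a
    using upper_triangular_zero[OF b(2,1) that rs(1)] .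
  have bi_zero: "bi $$ (c,s) = 0" if "s < c" "c < n" for c
    using upper_triangular_zero[OF biu bi(1) that] .
  have off_diag: "b $$ (r,a) * Z $$ (a,c) * bi $$ (c,s) = 0" if "a < n" "c < n" "a \<noteq> c" for a c
  proof (rule ccontr)
    assume "b $$ (r,a) * Z $$ (a,c) * bi $$ (c,s) \<noteq> 0"
    then have nz: "b $$ (r,a) \<noteq> 0" "Z $$ (a,c) \<noteq> 0" "bi $$ (c,s) \<noteq> 0" by auto
    have "r \<le> a" "c \<le> s" using nz(1,3) b_zero bi_zero that by (meson not_le)+
    then show False using mat_unit_in_H_shift[OF mat_unit_in_H_of_entry[OF Z that(3,1,2) nz(2)]]
        that rs not_in by auto
  qed
  have const_diag: "Z $$ (a,a) = Z $$ (r,r)" if "r \<le> a" "a \<le> s" for a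
  proof (rule ccontr)
    assume ne: "Z $$ (a,a) \<noteq> Z $$ (r,r)"
    then have "r < a" using that by (cases "r = a") auto
    then show False using mat_unit_in_H_shift[OF mat_unit_in_H_of_diag_entries[OF Z \<open>r < a\<close>]]
        ne that rs not_in by auto
  qed
  have "(b * Z * bi) $$ (r,s) = (\<Sum>a<n. \<Sum>c<n. b $$ (r,a) * Z $$ (a,c) * bi $$ (c,s))"
    using index_mult3_square[OF b(1) Zc bi(1) rs(1,2)] .
  also have "\<dots> = (\<Sum>a<n. b $$ (r,a) * Z $$ (a,a) * bi $$ (a,s))"
    by (intro sum.cong refl sum_lessThan_single) (use off_diag in auto)
  also have "\<dots> = (\<Sum>a<n. Z $$ (r,r) * (b $$ (r,a) * bi $$ (a,s)))"
  proof (intro sum.cong refl)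
    fix a assume "a \<in> {..<n}"
    then show "b $$ (r,a) * Z $$ (a,a) * bi $$ (a,s) = Z $$ (r,r) * (b $$ (r,a) * bi $$ (a,s))"
      using b_zero[of a] bi_zero[of a] const_diag[of a]
      by (cases "a < r \<or> s < a") (auto simp: not_less ac_simps)
  qed
  also have "\<dots> = Z $$ (r,r) * (b * bi) $$ (r,s)"
    using index_mult_square[OF b(1) bi(1) rs(1,2)] by (simp add: sum_distrib_left)
  also have "\<dots> = 0" using bbi rs by simp
  finally show False using rs by simp
qed

lemma conj_upper_triangular_diag_part_in_H: "diag_part n (b * Z * bi) \<in> H"
proof (cases "n = 0")
  case True
  then have "diag_part n (b * Z * bi) = 0\<^sub>m n n" by (intro eq_matI) auto
  then show ?thesis using H_zero by simp
next
  case False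
  have Zc: "Z \<in> carrier_mat n n" using Z H_carrier by auto
  have biu: "upper_triangular bi" using upper_triangular_left_inverse[OF b(2,1,3) bi] .
  define v where "v m = (b * Z * bi) $$ (m,m) - Z $$ (m,m)" for m
  have partial_v: "(\<Sum>i\<le>r. v i) = 0"
    if "r < n" "\<And>a c. c \<le> r \<Longrightarrow> r < a \<Longrightarrow> a < n \<Longrightarrow> Z $$ (a,c) = 0" for r
    unfolding v_def sum_subtractf
    using partial_trace_conj_upper_triangular[OF b(1) Zc bi(1) b(2) biu bi(2) that] by simp
  have "mat_diag n v \<in> H"
  proof (rule traceless_mat_diag_in_H)
    have "{..<n} = {..n-1}" using False by auto
    then show "(\<Sum>m<n. v m) = 0" using partial_v[of "n - 1"] False by simp
  next
    fix r assume r: "Suc r < n" "(\<Sum>i\<le>r. v i) \<noteq> 0"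
    then obtain a c where ac: "c \<le> r" "r < a" "a < n" "Z $$ (a,c) \<noteq> 0"
      using partial_v[of r] by force
    have "mat_unit n (Suc r) r \<in> H"
      using mat_unit_in_H_shift[OF mat_unit_in_H_of_entry[OF Z _ ac(3) _ ac(4)]] ac r by auto
    then show "coroot n r (Suc r) \<in> H" using coroot_in_H r by auto
  qed
  moreover have "diag_part n (b * Z * bi) = diag_part n Z + mat_diag n v"
    by (intro eq_matI) (auto simp: v_def mat_diag_def)
  ultimately show ?thesis using H_add diag_part_in_H[OF Z] by simp
qed

lemma conj_upper_triangular_in_H: "b * Z * bi \<in> H"
proof (rule in_H_of_entries)
  show "b * Z * bi \<in> carrier_mat n n" using b(1) bi(1) H_carrier[OF Z] by auto
qed (use conj_upper_triangular_entry_in_H conj_upper_triangular_diag_part_in_H in auto)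

end

lemma hess_var_representative:
  assumes "coset n g0 \<in> hess_var n x H" "x \<in> carrier_mat n n"
    "g0 \<in> carrier_mat n n" "g0i \<in> carrier_mat n n" "g0i * g0 = 1\<^sub>m n"
  shows "g0i * x * g0 \<in> H"
proof -
  obtain g gi where g: "coset n g0 = coset n g" "g \<in> SL n" "gi \<in> carrier_mat n n"
      "gi * g = 1\<^sub>m n" "gi * x * g \<in> H"
    using assms(1) unfolding hess_var_def by blast
  have gc: "g \<in> carrier_mat n n" using g unfolding SL_def by auto
  have "g = g * 1\<^sub>m n" using gc by simp
  then have "g \<in> coset n g" unfolding coset_def using one_in_Bor by blast
  then have "g \<in> coset n g0" using g(1) by simp
  then obtain b where b: "g = g0 * b" "b \<in> Bor n" unfolding coset_def by blast
  have bc: "b \<in> carrier_mat n n" "upper_triangular b" "det b = 1"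
    using b unfolding Bor_def SL_def by auto
  have ggi: "g * gi = 1\<^sub>m n" using mat_mult_left_right_inverse[OF g(3) gc g(4)] .
  have "(gi * g0) * b = gi * g" unfolding b(1) using assoc_mult_mat[OF g(3) assms(3) bc(1)] .
  then have b_inv: "(gi * g0) * b = 1\<^sub>m n" using g(4) by simp
  have "b = g0i * g" using left_inverse_cancel[OF assms(4,3) bc(1) assms(5)] b(1) by simp
  then have "b * gi = g0i * (g * gi)" using assoc_mult_mat[OF assms(4) gc g(3)] by simp
  then have b_gi: "b * gi = g0i" using ggi assms(4) by simp
  have "b * (gi * x * g) * (gi * g0) = (b * gi) * x * (g * gi) * g0"
    using bc(1) g(3) gc assms(2,3) by (simp add: assoc_mult_mat[of _ n n _ n _ n])
  also have "\<dots> = g0i * x * g0" using b_gi ggi assms by simp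
  finally have "g0i * x * g0 = b * (gi * x * g) * (gi * g0)" by (rule sym)
  also have "\<dots> \<in> H"
    using conj_upper_triangular_in_H[OF g(5) bc(1,2) _ _ b_inv] bc(3) g(3) assms(3) by simp
  finally show ?thesis .
qed

end

section \<open>Positions reachable by Borel conjugation\<close>

definition borel_support :: "nat \<Rightarrow> complex mat \<Rightarrow> (nat \<times> nat) set" where
  "borel_support n x = {(p,q). \<exists>b bi. b \<in> Bor n \<and> bi \<in> carrier_mat n n \<and> bi * b = 1\<^sub>m n
     \<and> (bi * x * b) $$ (p,q) \<noteq> 0}"

definition transvection :: "nat \<Rightarrow> complex \<Rightarrow> nat \<Rightarrow> nat \<Rightarrow> complex mat" where
  "transvection n t u v = 1\<^sub>m n + t \<cdot>\<^sub>m mat_unit n u v"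

lemma transvection_carrier[simp]: "transvection n t u v \<in> carrier_mat n n"
  by (simp add: transvection_def)

lemma transvection_dim[simp]: "dim_row (transvection n t u v) = n" "dim_col (transvection n t u v) = n"
  by (simp_all add: transvection_def)

lemma transvection_index[simp]:
  "r < n \<Longrightarrow> s < n \<Longrightarrow>
   transvection n t u v $$ (r,s) = (if r = s then 1 else 0) + t * (if r = u \<and> s = v then 1 else 0)"
  by (simp add: transvection_def)

lemma transvection_mult_index:
  assumes "Y \<in> carrier_mat n n" "v < n" "r < n" "s < n"
  shows "(transvection n t u v * Y) $$ (r,s) = Y $$ (r,s) + t * (if r = u then Y $$ (v,s) else 0)"
proof -
  have "transvection n t u v * Y = Y + t \<cdot>\<^sub>m (mat_unit n u v * Y)"
    unfolding transvection_def using assms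
    by (simp add: add_mult_distrib_mat[of _ n n _ _ n] mult_smult_assoc_mat[of _ n n _ n])
  then show ?thesis using assms by (simp add: mat_unit_mult_index del: index_mult_mat(1))
qed

lemma mult_transvection_index:
  assumes "Y \<in> carrier_mat n n" "u < n" "r < n" "s < n"
  shows "(Y * transvection n t u v) $$ (r,s) = Y $$ (r,s) + t * (if s = v then Y $$ (r,u) else 0)"
proof -
  have "Y * transvection n t u v = Y + t \<cdot>\<^sub>m (Y * mat_unit n u v)"
    unfolding transvection_def using assms
    by (simp add: mult_add_distrib_mat[of _ n n _ n] mult_smult_distrib[of _ n n _ n])
  then show ?thesis using assms by (simp add: mult_mat_unit_index del: index_mult_mat(1))
qed

lemma transvection_conj_index:
  assumes "Y \<in> carrier_mat n n" "u < v" "v < n" "r < n" "s < n"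
  shows "(transvection n (-t) u v * Y * transvection n t u v) $$ (r,s)
    = Y $$ (r,s) + t * ((if s = v then Y $$ (r,u) else 0) - (if r = u then Y $$ (v,s) else 0))
      - t * t * (if r = u \<and> s = v then Y $$ (v,u) else 0)"
proof -
  have "(transvection n (-t) u v * Y * transvection n t u v) $$ (r,s)
      = (transvection n (-t) u v * Y) $$ (r,s)
        + t * (if s = v then (transvection n (-t) u v * Y) $$ (r,u) else 0)"
    using assms by (intro mult_transvection_index) auto
  also have "\<dots> = Y $$ (r,s) + t * ((if s = v then Y $$ (r,u) else 0) - (if r = u then Y $$ (v,s) else 0))
      - t * t * (if r = u \<and> s = v then Y $$ (v,u) else 0)"
    using assms by (auto simp: transvection_mult_index algebra_simps simp del: index_mult_mat(1))
  finally show ?thesis .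
qed

lemma transvection_inverse:
  assumes "u \<noteq> v" "u < n" "v < n"
  shows "transvection n (-t) u v * transvection n t u v = 1\<^sub>m n"
  by (rule eq_matI) (use assms in \<open>auto simp: transvection_mult_index simp del: index_mult_mat(1)\<close>)

lemma transvection_in_Bor:
  assumes "u < v" "v < n"
  shows "transvection n t u v \<in> Bor n"
proof -
  have ut: "upper_triangular (transvection n t u v)"
    using assms by (intro upper_triangularI) auto
  have "diag_mat (transvection n t u v) = replicate n 1"
    using assms by (intro nth_equalityI) (auto simp: diag_mat_def)
  then have "det (transvection n t u v) = 1"
    using det_upper_triangular[OF ut transvection_carrier] by simp
  then show ?thesis using ut unfolding Bor_def SL_def by auto
qed

lemma quadratic_nonzero_somewhere:
  fixes A B C :: complex
  assumes "A \<noteq> 0 \<or> B \<noteq> 0 \<or> C \<noteq> 0"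
  shows "\<exists>t. A + t * B - t * t * C \<noteq> 0"
proof (rule ccontr)
  assume "\<not> ?thesis"
  then have "A + 0 * B - 0 * 0 * C = 0" "A + 1 * B - 1 * 1 * C = 0"
    "A + (-1) * B - (-1) * (-1) * C = 0"
    by blast+
  then have "A = 0" "B = 0" "C = 0" by (auto simp: algebra_simps)
  then show False using assms by simp
qed

text \<open>
  Conjugating Y by 1 + tE_uv gives at (r,s) a polynomial in t whose coefficients are the three
  displayed quantities; if one of them is nonzero, some t makes the entry nonzero.
\<close>

lemma borel_support_transvection:
  assumes x: "x \<in> carrier_mat n n" and b: "b \<in> Bor n" "bi \<in> carrier_mat n n" "bi * b = 1\<^sub>m n"
    and uv: "u < v" "v < n" and rs: "r < n" "s < n"
    and nz: "(bi * x * b) $$ (r,s) \<noteq> 0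
       \<or> ((if s = v then (bi * x * b) $$ (r,u) else 0) - (if r = u then (bi * x * b) $$ (v,s) else 0)) \<noteq> 0
       \<or> (if r = u \<and> s = v then (bi * x * b) $$ (v,u) else 0) \<noteq> 0"
  shows "(r,s) \<in> borel_support n x"
proof -
  define Y where "Y = bi * x * b"
  have bc: "b \<in> carrier_mat n n" using b unfolding Bor_def SL_def by auto
  have Yc: "Y \<in> carrier_mat n n" unfolding Y_def using x bc b by auto
  obtain t where t:
    "Y $$ (r,s) + t * ((if s = v then Y $$ (r,u) else 0) - (if r = u then Y $$ (v,s) else 0))
      - t * t * (if r = u \<and> s = v then Y $$ (v,u) else 0) \<noteq> 0"
    using quadratic_nonzero_somewhere nz unfolding Y_def[symmetric] by blast
  define b' where "b' = b * transvection n t u v"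
  define bi' where "bi' = transvection n (-t) u v * bi"
  have "bi' * b' = transvection n (-t) u v * (bi * (b * transvection n t u v))"
    unfolding bi'_def b'_def using b bc by (simp add: assoc_mult_mat[of _ n n _ n _ n])
  also have "\<dots> = 1\<^sub>m n"
    using left_inverse_cancel[OF b(2) bc transvection_carrier b(3)] transvection_inverse[of u v n t] uv
    by simp
  finally have inv: "bi' * b' = 1\<^sub>m n" .
  have "(bi' * x * b') $$ (r,s) = (transvection n (-t) u v * Y * transvection n t u v) $$ (r,s)"
    unfolding bi'_def b'_def Y_def using b bc x by (simp add: assoc_mult_mat[of _ n n _ n _ n])
  also have "\<dots> = Y $$ (r,s) + t * ((if s = v then Y $$ (r,u) else 0) - (if r = u then Y $$ (v,s) else 0))
      - t * t * (if r = u \<and> s = v then Y $$ (v,u) else 0)"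
    using transvection_conj_index[OF Yc uv rs] .
  finally have "(bi' * x * b') $$ (r,s) \<noteq> 0" using t by simp
  moreover have "b' \<in> Bor n" unfolding b'_def by (rule Bor_mult[OF b(1) transvection_in_Bor[OF uv]])
  moreover have "bi' \<in> carrier_mat n n" unfolding bi'_def using b by auto
  ultimately show ?thesis using inv unfolding borel_support_def by blast
qed

lemma borel_supportE:
  assumes "(p,q) \<in> borel_support n x"
  obtains b bi where "b \<in> Bor n" "bi \<in> carrier_mat n n" "bi * b = 1\<^sub>m n" "(bi * x * b) $$ (p,q) \<noteq> 0"
  using assms unfolding borel_support_def by blast

lemma entry_in_borel_support:
  assumes "x $$ (p,q) \<noteq> 0" "x \<in> carrier_mat n n" "p < n" "q < n"
  shows "(p,q) \<in> borel_support n x"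
  unfolding borel_support_def using assms one_in_Bor[of n] by (auto intro!: exI[of _ "1\<^sub>m n"])

lemma shift_closed_borel_support:
  assumes x: "x \<in> carrier_mat n n"
  shows "shift_closed n (borel_support n x)"
  unfolding shift_closed_def
proof (intro conjI allI impI)
  fix a b a' assume "(a,b) \<in> borel_support n x" "a \<noteq> b" "a' < a" "a < n" "b < n" "a' \<noteq> b"
  then show "(a',b) \<in> borel_support n x"
    by (elim borel_supportE, intro borel_support_transvection[OF x, of _ _ a' a]) auto
next
  fix a b b' assume "(a,b) \<in> borel_support n x" "a \<noteq> b" "b < b'" "b' < n" "a < n" "a \<noteq> b'"
  then show "(a,b') \<in> borel_support n x"
    by (elim borel_supportE, intro borel_support_transvection[OF x, of _ _ b b']) auto
next
  fix a b assume "(a,b) \<in> borel_support n x" "b < a" "a < n"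
  then show "(b,a) \<in> borel_support n x"
    by (elim borel_supportE, intro borel_support_transvection[OF x, of _ _ b a]) auto
qed

lemma diag_entries_in_borel_support:
  assumes "x \<in> carrier_mat n n" "j < k" "k < n" "x $$ (j,j) \<noteq> x $$ (k,k)"
  shows "(j,k) \<in> borel_support n x"
  by (rule borel_support_transvection[OF assms(1) one_in_Bor, of "1\<^sub>m n" j k]) (use assms in auto)

definition permute_mat :: "nat \<Rightarrow> (nat \<Rightarrow> nat) \<Rightarrow> complex mat \<Rightarrow> complex mat" where
  "permute_mat n \<pi> Y = mat n n (\<lambda>(r,s). Y $$ (inv_into UNIV \<pi> r, inv_into UNIV \<pi> s))"

lemma permute_mat_carrier[simp]: "permute_mat n \<pi> Y \<in> carrier_mat n n"
  by (simp add: permute_mat_def)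

lemma permute_mat_dim[simp]: "dim_row (permute_mat n \<pi> Y) = n" "dim_col (permute_mat n \<pi> Y) = n"
  by (simp_all add: permute_mat_def)

lemma permute_mat_index[simp]:
  "r < n \<Longrightarrow> s < n \<Longrightarrow> permute_mat n \<pi> Y $$ (r,s) = Y $$ (inv_into UNIV \<pi> r, inv_into UNIV \<pi> s)"
  by (simp add: permute_mat_def)

lemma perm_mat_carrier[simp]: "perm_mat n \<pi> \<in> carrier_mat n n"
  by (simp add: perm_mat_def)

lemma perm_mat_dim[simp]: "dim_row (perm_mat n \<pi>) = n" "dim_col (perm_mat n \<pi>) = n"
  by (simp_all add: perm_mat_def)

lemma perm_mat_index[simp]: "r < n \<Longrightarrow> c < n \<Longrightarrow> perm_mat n \<pi> $$ (r,c) = (if r = \<pi> c then 1 else 0)"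
  by (simp add: perm_mat_def)

lemma permutes_inv_less:
  assumes "\<pi> permutes {..<n}" "r < n"
  shows "inv_into UNIV \<pi> r < n"
  using permutes_in_image[OF permutes_inv[OF assms(1)], of r] assms(2) by simp

lemma perm_mat_mult:
  assumes "\<pi> permutes {..<n}" "Y \<in> carrier_mat n n"
  shows "perm_mat n \<pi> * Y = mat n n (\<lambda>(r,c). Y $$ (inv_into UNIV \<pi> r, c))"
proof (rule eq_matI)
  fix r c assume "r < dim_row (mat n n (\<lambda>(r,c). Y $$ (inv_into UNIV \<pi> r, c)))"
    "c < dim_col (mat n n (\<lambda>(r,c). Y $$ (inv_into UNIV \<pi> r, c)))"
  then have rc: "r < n" "c < n" by auto
  have "(perm_mat n \<pi> * Y) $$ (r,c) = (\<Sum>m<n. perm_mat n \<pi> $$ (r,m) * Y $$ (m,c))"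
    using assms rc by (intro index_mult_square) auto
  also have "\<dots> = perm_mat n \<pi> $$ (r, inv_into UNIV \<pi> r) * Y $$ (inv_into UNIV \<pi> r, c)"
  proof (rule sum_lessThan_single)
    show "inv_into UNIV \<pi> r < n" using permutes_inv_less[OF assms(1) rc(1)] .
    fix m assume m: "m < n" "m \<noteq> inv_into UNIV \<pi> r"
    then have "r \<noteq> \<pi> m" using permutes_inverses(2)[OF assms(1)] by metis
    then show "perm_mat n \<pi> $$ (r,m) * Y $$ (m,c) = 0" using rc m by simp
  qed
  also have "\<dots> = Y $$ (inv_into UNIV \<pi> r, c)"
    using rc permutes_inv_less[OF assms(1) rc(1)] permutes_inverses(1)[OF assms(1)] by simp
  finally show "(perm_mat n \<pi> * Y) $$ (r,c) = mat n n (\<lambda>(r,c). Y $$ (inv_into UNIV \<pi> r, c)) $$ (r,c)"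
    using rc by simp
qed (use assms in auto)

lemma mult_perm_mat_inv:
  assumes "\<pi> permutes {..<n}" "Y \<in> carrier_mat n n"
  shows "Y * perm_mat n (inv_into UNIV \<pi>) = mat n n (\<lambda>(r,c). Y $$ (r, inv_into UNIV \<pi> c))"
proof (rule eq_matI)
  fix r c assume "r < dim_row (mat n n (\<lambda>(r,c). Y $$ (r, inv_into UNIV \<pi> c)))"
    "c < dim_col (mat n n (\<lambda>(r,c). Y $$ (r, inv_into UNIV \<pi> c)))"
  then have rc: "r < n" "c < n" by auto
  have "(Y * perm_mat n (inv_into UNIV \<pi>)) $$ (r,c) = (\<Sum>m<n. Y $$ (r,m) * perm_mat n (inv_into UNIV \<pi>) $$ (m,c))"
    using assms rc by (intro index_mult_square) auto
  also have "\<dots> = Y $$ (r, inv_into UNIV \<pi> c) * perm_mat n (inv_into UNIV \<pi>) $$ (inv_into UNIV \<pi> c, c)"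
    using rc permutes_inv_less[OF assms(1) rc(2)] by (intro sum_lessThan_single) auto
  also have "\<dots> = Y $$ (r, inv_into UNIV \<pi> c)"
    using rc permutes_inv_less[OF assms(1) rc(2)] by simp
  finally show "(Y * perm_mat n (inv_into UNIV \<pi>)) $$ (r,c) = mat n n (\<lambda>(r,c). Y $$ (r, inv_into UNIV \<pi> c)) $$ (r,c)"
    using rc by simp
qed (use assms in auto)

lemma perm_mat_conj:
  assumes "\<pi> permutes {..<n}" "Y \<in> carrier_mat n n"
  shows "perm_mat n \<pi> * Y * perm_mat n (inv_into UNIV \<pi>) = permute_mat n \<pi> Y"
  using assms permutes_inv_less[OF assms(1)]
  by (auto simp: perm_mat_mult mult_perm_mat_inv permute_mat_def intro!: eq_matI)

lemma perm_mat_mult_inv: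
  assumes "\<pi> permutes {..<n}"
  shows "perm_mat n \<pi> * perm_mat n (inv_into UNIV \<pi>) = 1\<^sub>m n"
proof -
  have "perm_mat n \<pi> * 1\<^sub>m n * perm_mat n (inv_into UNIV \<pi>) = permute_mat n \<pi> (1\<^sub>m n)"
    using perm_mat_conj[OF assms one_carrier_mat] by simp
  also have "\<dots> = 1\<^sub>m n"
    using permutes_inv_less[OF assms] permutes_inj[OF permutes_inv[OF assms]]
    by (intro eq_matI) (auto dest: injD)
  finally show ?thesis by simp
qed

context
  fixes n :: nat and \<pi> :: "nat \<Rightarrow> nat" and c :: complex
  assumes \<pi>: "\<pi> permutes {..<n}" and c: "c \<noteq> 0"
begin

lemma scaled_perm_mat_inverse:
  "((1/c) \<cdot>\<^sub>m perm_mat n (inv_into UNIV \<pi>)) * (c \<cdot>\<^sub>m perm_mat n \<pi>) = 1\<^sub>m n"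
  "(c \<cdot>\<^sub>m perm_mat n \<pi>) * ((1/c) \<cdot>\<^sub>m perm_mat n (inv_into UNIV \<pi>)) = 1\<^sub>m n"
  using perm_mat_mult_inv[OF \<pi>] perm_mat_mult_inv[OF permutes_inv[OF \<pi>]] c
  by (simp_all add: mult_smult_assoc_mat[of _ n n _ n] mult_smult_distrib[of _ n n _ n]
      smult_inverse_cancel inv_inv_eq permutes_bij[OF \<pi>])

lemma scaled_perm_mat_conj:
  assumes "Y \<in> carrier_mat n n"
  shows "(c \<cdot>\<^sub>m perm_mat n \<pi>) * Y * ((1/c) \<cdot>\<^sub>m perm_mat n (inv_into UNIV \<pi>)) = permute_mat n \<pi> Y"
  using perm_mat_conj[OF \<pi> assms] c assms
  by (simp add: mult_smult_assoc_mat[of _ n n _ n] mult_smult_distrib[of _ n n _ n]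
      mult_carrier_mat[of _ n n _ n] smult_inverse_cancel)

end

lemma dots_nonempty:
  assumes "\<pi> permutes {..<n}" "n > 0"
  obtains c where "c \<noteq> 0" "c \<cdot>\<^sub>m perm_mat n \<pi> \<in> dots n \<pi>"
proof -
  have "det (perm_mat n \<pi>) * det (perm_mat n (inv_into UNIV \<pi>)) = 1"
    using det_mult[OF perm_mat_carrier perm_mat_carrier, of n \<pi> "inv_into UNIV \<pi>"]
      perm_mat_mult_inv[OF assms(1)] by simp
  then have "det (perm_mat n \<pi>) \<noteq> 0" by auto
  then obtain c where c: "c ^ n = 1 / det (perm_mat n \<pi>)"
    using complex_nth_root_exists assms(2) by (metis divide_eq_0_iff one_neq_zero)
  then have "det (c \<cdot>\<^sub>m perm_mat n \<pi>) = 1" "c \<noteq> 0"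
    using \<open>det (perm_mat n \<pi>) \<noteq> 0\<close> assms(2) by (auto simp: power_0_left)
  then show ?thesis using that unfolding dots_def SL_def by auto
qed

lemma dots_left_inverse:
  assumes "\<pi> permutes {..<n}" "n > 0" "d \<in> dots n \<pi>" "di \<in> carrier_mat n n" "di * d = 1\<^sub>m n"
  obtains c where "c \<noteq> 0" "d = c \<cdot>\<^sub>m perm_mat n \<pi>" "di = (1/c) \<cdot>\<^sub>m perm_mat n (inv_into UNIV \<pi>)"
proof -
  obtain c where dc: "d = c \<cdot>\<^sub>m perm_mat n \<pi>" "det d = 1" "d \<in> carrier_mat n n"
    using assms(3) unfolding dots_def SL_def by auto
  have "c \<noteq> 0" using dc assms(2) by (auto simp: power_0_left)
  have "di = di * (d * ((1/c) \<cdot>\<^sub>m perm_mat n (inv_into UNIV \<pi>)))"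
    using scaled_perm_mat_inverse(2)[OF assms(1) \<open>c \<noteq> 0\<close>] dc(1) assms(4) by simp
  also have "\<dots> = (1/c) \<cdot>\<^sub>m perm_mat n (inv_into UNIV \<pi>)"
    by (rule left_inverse_cancel[where m = n, OF assms(4) dc(3) _ assms(5)]) simp
  finally show ?thesis using that \<open>c \<noteq> 0\<close> dc(1) by blast
qed

lemma coset_of_dot_inverse_in_hess_var:
  assumes "\<pi> permutes {..<n}" "n > 0" "x \<in> carrier_mat n n" "permute_mat n \<pi> x \<in> H"
    "d \<in> dots n \<pi>" "di \<in> carrier_mat n n" "di * d = 1\<^sub>m n"
  shows "coset n di \<in> hess_var n x H"
proof -
  obtain c where c: "c \<noteq> 0" "d = c \<cdot>\<^sub>m perm_mat n \<pi>" "di = (1/c) \<cdot>\<^sub>m perm_mat n (inv_into UNIV \<pi>)"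
    using dots_left_inverse[OF assms(1,2,5-7)] .
  have "d * x * di \<in> H" using scaled_perm_mat_conj[OF assms(1) c(1) assms(3)] assms(4) c by simp
  moreover have "d * di = 1\<^sub>m n" "di \<in> SL n"
    using scaled_perm_mat_inverse[OF assms(1) c(1)] c det_mult[OF assms(6), of d] assms(5-7)
    unfolding dots_def SL_def by auto
  ultimately show ?thesis
    unfolding hess_var_def using assms(5,6) unfolding dots_def SL_def by blast
qed

lemma permutes_compose_transpose:
  assumes "w permutes {..<n}" "j < n" "k < n"
  shows "w \<circ> Transposition.transpose j k permutes {..<n}"
  using assms by (intro permutes_compose[OF _ assms(1)] permutes_swap_id) auto

lemma swapped_position_dominated:
  fixes w :: "nat \<Rightarrow> nat"
  assumes ijkl: "i < j" "j < k" "k < l" "l < n" and w_order: "w l < w j" "w j < w k" "w k < w i"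
    and pq: "p < n" "q < n" "p \<noteq> q"
  defines "\<tau> \<equiv> w \<circ> Transposition.transpose j k"
  shows "\<exists>p' q'. p' \<le> p \<and> q \<le> q' \<and> q' < n \<and> p' \<noteq> q' \<and> \<tau> p \<le> w p' \<and> w q' \<le> \<tau> q"
proof -
  have \<tau>: "\<tau> m = (if m = j then w k else if m = k then w j else w m)" for m
    unfolding \<tau>_def by (auto simp: Transposition.transpose_def)
  have witness: ?thesis
    if "p' \<le> p" "q \<le> q'" "q' < n" "p' \<noteq> q'" "\<tau> p \<le> w p'" "w q' \<le> \<tau> q" for p' q'
    using that by blast
  consider "p \<noteq> j" "p \<noteq> k" "q \<noteq> j" "q \<noteq> k" | "p = k" "q = j" | "p = j" "q \<noteq> i" "q \<noteq> k"
    | "p = k" "q \<noteq> j" | "q = j" "p \<noteq> k" | "q = k" "p \<noteq> j" "p \<noteq> l"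
    | "p = j" "q = i" | "p = l" "q = k" | "p = j" "q = k"
    using pq by blast
  then show ?thesis
  proof cases
    case 1 then show ?thesis using pq by (intro witness[of p q]) (auto simp: \<tau>)
  next
    case 2 then show ?thesis using ijkl w_order by (intro witness[of k j]) (auto simp: \<tau>)
  next
    case 3 then show ?thesis using pq ijkl w_order by (intro witness[of i q]) (auto simp: \<tau>)
  next
    case 4 then show ?thesis using pq w_order by (intro witness[of k q]) (auto simp: \<tau>)
  next
    case 5 then show ?thesis using pq w_order by (intro witness[of p j]) (auto simp: \<tau>)
  next
    case 6 then show ?thesis using pq ijkl w_order by (intro witness[of p l]) (auto simp: \<tau>)
  qed (use ijkl w_order in \<open>intro witness[of i l]; auto simp: \<tau>\<close>)+
qed

lemma diag_part_permute_swap: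
  assumes w: "w permutes {..<n}" and "j < n" "k < n" "j \<noteq> k"
  shows "diag_part n (permute_mat n (w \<circ> Transposition.transpose j k) x)
    = diag_part n (permute_mat n w x) + (x $$ (k,k) - x $$ (j,j)) \<cdot>\<^sub>m coroot n (w j) (w k)"
proof (rule eq_matI)
  fix r s assume "r < dim_row (diag_part n (permute_mat n w x)
      + (x $$ (k,k) - x $$ (j,j)) \<cdot>\<^sub>m coroot n (w j) (w k))"
    "s < dim_col (diag_part n (permute_mat n w x)
      + (x $$ (k,k) - x $$ (j,j)) \<cdot>\<^sub>m coroot n (w j) (w k))"
  then have rs: "r < n" "s < n" by auto
  define p where "p = inv_into UNIV w r"
  have rp: "r = w p" unfolding p_def using permutes_inverses[OF w] by simp
  have inv_swap: "inv_into UNIV (w \<circ> Transposition.transpose j k) r = Transposition.transpose j k p"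
    unfolding p_def using permutes_bij[OF w] by (simp add: o_inv_distrib)
  have "(w p = w j) = (p = j)" "(w p = w k) = (p = k)"
    using permutes_inj[OF w] by (auto dest: injD)
  then show "diag_part n (permute_mat n (w \<circ> Transposition.transpose j k) x) $$ (r,s)
    = (diag_part n (permute_mat n w x) + (x $$ (k,k) - x $$ (j,j)) \<cdot>\<^sub>m coroot n (w j) (w k)) $$ (r,s)"
    using rs assms(4) inv_swap unfolding p_def[symmetric] rp
    by (auto simp: Transposition.transpose_def permutes_inverses[OF w])
qed auto

section \<open>Schubert cells inside Hessenberg varieties\<close>

locale schubert_cell_in_hess_var = hessenberg n H for n H +
  fixes w :: "nat \<Rightarrow> nat" and x :: "complex mat"
  assumes w: "w permutes {..<n}" and n_pos: "n > 0" and x: "x \<in> carrier_mat n n"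
    and cell: "schubert_cell n (inv_into UNIV w) \<subseteq> hess_var n x H"
begin

lemma permute_borel_conj_in_H:
  assumes b: "b \<in> Bor n" "bi \<in> carrier_mat n n" "bi * b = 1\<^sub>m n"
  shows "permute_mat n w (bi * x * b) \<in> H"
proof -
  have iw: "inv_into UNIV w permutes {..<n}" using permutes_inv[OF w] .
  obtain c where c: "c \<noteq> 0" "c \<cdot>\<^sub>m perm_mat n (inv_into UNIV w) \<in> dots n (inv_into UNIV w)"
    using dots_nonempty[OF iw n_pos] .
  define d where "d = c \<cdot>\<^sub>m perm_mat n (inv_into UNIV w)"
  define di where "di = (1/c) \<cdot>\<^sub>m perm_mat n w"
  have bc: "b \<in> carrier_mat n n" using b unfolding Bor_def SL_def by auto
  have dc: "d \<in> carrier_mat n n" "di \<in> carrier_mat n n" unfolding d_def di_def by auto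
  have inv_w: "inv_into UNIV (inv_into UNIV w) = w" using permutes_bij[OF w] by (simp add: inv_inv_eq)
  have di_d: "di * d = 1\<^sub>m n"
    using scaled_perm_mat_inverse(1)[OF iw c(1)] unfolding d_def di_def inv_w .
  have "coset n (b * d) \<in> hess_var n x H"
    using cell b c unfolding schubert_cell_def d_def by blast
  then have "(di * bi) * x * (b * d) \<in> H"
  proof (rule hess_var_representative[OF _ x])
    have "(di * bi) * (b * d) = di * (bi * (b * d))"
      using dc b(2) bc by (simp add: assoc_mult_mat[of _ n n _ n _ n])
    then show "(di * bi) * (b * d) = 1\<^sub>m n"
      using left_inverse_cancel[OF b(2) bc dc(1) b(3)] di_d by simp
  qed (use b(2) bc dc in auto)
  moreover have "(di * bi) * x * (b * d) = di * (bi * x * b) * d"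
    using b bc x unfolding d_def di_def by (simp add: assoc_mult_mat[of _ n n _ n _ n])
  moreover have "di * (bi * x * b) * d = permute_mat n w (bi * x * b)"
    using scaled_perm_mat_conj[OF w, of "1/c" "bi * x * b"] c b bc x
    unfolding d_def di_def by simp
  ultimately show ?thesis by simp
qed

lemma mat_unit_in_H_of_borel_support:
  assumes "(p,q) \<in> borel_support n x" "p < n" "q < n" "p \<noteq> q"
  shows "mat_unit n (w p) (w q) \<in> H"
proof -
  obtain b bi where b: "b \<in> Bor n" "bi \<in> carrier_mat n n" "bi * b = 1\<^sub>m n"
    "(bi * x * b) $$ (p,q) \<noteq> 0"
    using borel_supportE[OF assms(1)] .
  have wpq: "w p < n" "w q < n" "w p \<noteq> w q"
    using assms permutes_in_image[OF w] permutes_inj[OF w] by (auto dest: injD)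
  have "permute_mat n w (bi * x * b) $$ (w p, w q) \<noteq> 0"
    using b(4) wpq permutes_inverses[OF w] by simp
  then show ?thesis
    using mat_unit_in_H_of_entry[OF permute_borel_conj_in_H[OF b(1-3)]] wpq by auto
qed

context
  fixes i j k l :: nat
  assumes ijkl: "i < j" "j < k" "k < l" "l < n" and w_order: "w l < w j" "w j < w k" "w k < w i"
begin

lemma permute_swap_entry_in_H:
  assumes "r < n" "s < n" "r \<noteq> s" "permute_mat n (w \<circ> Transposition.transpose j k) x $$ (r,s) \<noteq> 0"
  shows "mat_unit n r s \<in> H"
proof -
  define \<tau> where "\<tau> = w \<circ> Transposition.transpose j k"
  have \<tau>: "\<tau> permutes {..<n}"
    unfolding \<tau>_def using permutes_compose_transpose[OF w] ijkl by simp
  define p q where "p = inv_into UNIV \<tau> r" and "q = inv_into UNIV \<tau> s"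
  have rs: "r = \<tau> p" "s = \<tau> q" unfolding p_def q_def using permutes_inverses(1)[OF \<tau>] by auto
  have pq: "p < n" "q < n" "p \<noteq> q" "r = \<tau> p" "s = \<tau> q" "x $$ (p,q) \<noteq> 0"
    using assms permutes_inv_less[OF \<tau>] rs unfolding p_def q_def \<tau>_def[symmetric] by auto
  obtain p' q' where dom: "p' \<le> p" "q \<le> q'" "q' < n" "p' \<noteq> q'" "\<tau> p \<le> w p'" "w q' \<le> \<tau> q"
    using swapped_position_dominated[OF ijkl w_order pq(1-3)] unfolding \<tau>_def by blast
  have "(p',q') \<in> borel_support n x"
    using shift_closedD[OF shift_closed_borel_support[OF x]
        entry_in_borel_support[OF pq(6) x pq(1,2)]] pq dom by auto
  then have "mat_unit n (w p') (w q') \<in> H"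
    using mat_unit_in_H_of_borel_support dom pq by auto
  moreover have "w p' < n" "w q' < n" "w p' \<noteq> w q'"
    using dom pq permutes_in_image[OF w] permutes_inj[OF w] by (auto dest: injD)
  ultimately show ?thesis
    using mat_unit_in_H_shift[of "w p'" "w q'" r s] dom assms(1-3) pq(4,5) by auto
qed

lemma diag_part_permute_swap_in_H:
  "diag_part n (permute_mat n (w \<circ> Transposition.transpose j k) x) \<in> H"
proof -
  have diag_w: "diag_part n (permute_mat n w x) \<in> H"
    using diag_part_in_H[OF permute_borel_conj_in_H[OF one_in_Bor, of "1\<^sub>m n"]] x by simp
  have coroot_H: "coroot n (w j) (w k) \<in> H" if "x $$ (k,k) - x $$ (j,j) \<noteq> 0"
  proof -
    have "(i,l) \<in> borel_support n x"
      using shift_closedD[OF shift_closed_borel_support[OF x]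
          diag_entries_in_borel_support[OF x, of j k]] ijkl that by auto
    then have "mat_unit n (w i) (w l) \<in> H"
      using mat_unit_in_H_of_borel_support ijkl by auto
    moreover have "w i < n" "w l < n" using ijkl permutes_in_image[OF w] by auto
    ultimately have "mat_unit n (w k) (w j) \<in> H"
      using mat_unit_in_H_shift[of "w i" "w l" "w k" "w j"] w_order by auto
    then show ?thesis using coroot_in_H w_order \<open>w i < n\<close> by auto
  qed
  have "j < n" "k < n" "j \<noteq> k" using ijkl by auto
  then show ?thesis
    unfolding diag_part_permute_swap[OF w \<open>j < n\<close> \<open>k < n\<close> \<open>j \<noteq> k\<close>]
    using H_add[OF diag_w H_smult_or_zero[of "x $$ (k,k) - x $$ (j,j)" "coroot n (w j) (w k)"]]
      coroot_H by simp
qed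

lemma permute_swap_in_H: "permute_mat n (w \<circ> Transposition.transpose j k) x \<in> H"
  by (rule in_H_of_entries) (use permute_swap_entry_in_H diag_part_permute_swap_in_H in auto)

end

end

theorem lemma4p3:
  fixes n i j k l :: nat and w :: "nat \<Rightarrow> nat" and x :: "complex mat" and H :: "complex mat set"
  assumes "w permutes {..<n}"
    and "i < j" "j < k" "k < l" "l < n"
    and "w l < w j" "w j < w k" "w k < w i"
    and "x \<in> sl n"
    and "hessenberg_space n H"
    and "schubert_cell n (inv_into UNIV w) \<subseteq> hess_var n x H"
  shows "\<forall>dd \<in> dots n (\<lambda>m. if m = j then w k else if m = k then w j else w m).
           \<forall>di \<in> carrier_mat n n. di * dd = 1\<^sub>m n \<longrightarrow> coset n di \<in> hess_var n x H"
proof (intro ballI impI)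
  fix dd di
  assume dd: "dd \<in> dots n (\<lambda>m. if m = j then w k else if m = k then w j else w m)"
    and di: "di \<in> carrier_mat n n" "di * dd = 1\<^sub>m n"
  have swap: "(\<lambda>m. if m = j then w k else if m = k then w j else w m) = w \<circ> Transposition.transpose j k"
    by (auto simp: Transposition.transpose_def)
  have x: "x \<in> carrier_mat n n" using assms(9) unfolding sl_def by auto
  interpret schubert_cell_in_hess_var n H w x
    using assms(1,5,10,11) x by unfold_locales auto
  show "coset n di \<in> hess_var n x H"
    using coset_of_dot_inverse_in_hess_var[OF _ n_pos x permute_swap_in_H[OF assms(2-8)] _ di]
      permutes_compose_transpose[OF assms(1)] assms(2-5) dd unfolding swap by simp
qed

end
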